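(* Let $T,B_1,B_3,\varepsilon>0$. The function $I_\varepsilon:Y\times X_{B_1}\to\mathbb{R}$, $$I_\varepsilon(\tilde\theta,\gamma)=\int_{(0,T)^2}\big((A_\varepsilon\tilde\theta)_{t_1}(\gamma_{t_1})-(A_\varepsilon\tilde\theta)_{t_2}(\gamma_{t_2})\big)^+\chi_{\{t_1<t_2\}}\,dt_1\,dt_2,$$ is continuous.
   Context: $X_{B_1}$: left-continuous $\gamma:(0,T)\to[0,1]$ with total variation $\le B_1$, metric $\|\cdot\|_{L^2(0,T)}$; $\gamma_t=\gamma(t)$. $Y_{B_3}$: nondecreasing $\theta:[0,1]\to\mathbb{R}$, right-continuous on $[0,1)$, $|\theta|\le B_3$, metric $\|\cdot\|_{L^2(0,1)}$. $Y=C([0,T);Y_{B_3})$ with metric $\sup_t\|\tilde\theta_t-\tilde\theta'_t\|_{L^2}$, $\tilde\theta_t=\tilde\theta(t)$. $A_\varepsilon:Y\to Y$ is $(A_\varepsilon\tilde\theta)_t(z)=\varepsilon^{-1}\int_z^{z+\varepsilon}\tilde\theta_t(w)\,dw$, where $\tilde\theta_t(w)$ is set equal to $B_3$ for $w\ge1$. *)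

theory Defs
  imports "HOL-Analysis.Analysis"
begin

definition L2dist :: "real \<Rightarrow> real \<Rightarrow> (real \<Rightarrow> real) \<Rightarrow> (real \<Rightarrow> real) \<Rightarrow> real" where
  "L2dist a b f g = sqrt (LINT w:{a<..<b}|lborel. (f w - g w)^2)"

definition tv_le :: "real \<Rightarrow> real \<Rightarrow> (real \<Rightarrow> real) \<Rightarrow> bool" where
  "tv_le T B g \<longleftrightarrow> (\<forall>(n::nat) (s::nat \<Rightarrow> real).
      (\<forall>i\<le>n. s i \<in> {0<..<T}) \<and> (\<forall>i<n. s i < s (Suc i)) \<longrightarrow>
      (\<Sum>i<n. \<bar>g (s (Suc i)) - g (s i)\<bar>) \<le> B)"

definition X_B :: "real \<Rightarrow> real \<Rightarrow> (real \<Rightarrow> real) set" where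
  "X_B T B1 = {g. (\<forall>t\<in>{0<..<T}. (g \<longlongrightarrow> g t) (at_left t))
                 \<and> (\<forall>t\<in>{0<..<T}. 0 \<le> g t \<and> g t \<le> 1)
                 \<and> tv_le T B1 g}"

definition Y_B :: "real \<Rightarrow> (real \<Rightarrow> real) set" where
  "Y_B B3 = {th. mono_on {0..1} th
                 \<and> (\<forall>z\<in>{0..<1}. (th \<longlongrightarrow> th z) (at_right z))
                 \<and> (\<forall>z\<in>{0..1}. \<bar>th z\<bar> \<le> B3)}"

text \<open>The space Y = C([0,T); Y_{B3}); thth t is the element at time t.\<close>
definition Yspace :: "real \<Rightarrow> real \<Rightarrow> (real \<Rightarrow> real \<Rightarrow> real) set" where
  "Yspace T B3 = {thth. (\<forall>t\<in>{0..<T}. thth t \<in> Y_B B3)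
     \<and> (\<forall>t\<in>{0..<T}. \<forall>e>0. \<exists>d>0. \<forall>s\<in>{0..<T}. \<bar>s - t\<bar> < d \<longrightarrow>
            L2dist 0 1 (thth s) (thth t) < e)}"

definition Ydist :: "real \<Rightarrow> (real \<Rightarrow> real \<Rightarrow> real) \<Rightarrow> (real \<Rightarrow> real \<Rightarrow> real) \<Rightarrow> real" where
  "Ydist T th1 th2 = (SUP t\<in>{0..<T}. L2dist 0 1 (th1 t) (th2 t))"

definition A_eps :: "real \<Rightarrow> real \<Rightarrow> (real \<Rightarrow> real \<Rightarrow> real) \<Rightarrow> real \<Rightarrow> real \<Rightarrow> real" where
  "A_eps B3 eps thth t z =
     (LINT w:{z..z+eps}|lborel. (if w \<ge> 1 then B3 else thth t w)) / eps"

definition I_eps :: "real \<Rightarrow> real \<Rightarrow> real \<Rightarrow> (real \<Rightarrow> real \<Rightarrow> real) \<Rightarrow> (real \<Rightarrow> real) \<Rightarrow> real" where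
  "I_eps T B3 eps thth g =
     (LINT p:({0<..<T} \<times> {0<..<T})|lborel.
        (if fst p < snd p then
           max 0 (A_eps B3 eps thth (fst p) (g (fst p)) - A_eps B3 eps thth (snd p) (g (snd p)))
         else 0))"

end

theory Submission
  imports Defs
begin

text \<open>Averaging over a window of width \<open>\<epsilon>\<close> makes \<open>(A\<^sub>\<epsilon>\<theta>)\<^sub>t\<close> Lipschitz in the space
  variable, with constant \<open>2B\<^sub>3/\<epsilon>\<close>, and \<open>1/\<epsilon>\<close>-Lipschitz in the profile for the \<open>L\<^sup>2\<close>
  distance (Cauchy--Schwarz). Hence the integrands \<open>a(t) = (A\<^sub>\<epsilon>\<theta>)\<^sub>t(\<gamma>\<^sub>t)\<close> of two pairs
  \<open>(\<theta>,\<gamma>)\<close>, \<open>(\<theta>',\<gamma>')\<close> satisfy \<open>\<bar>a'(t) - a(t)\<bar> \<le> d\<^sub>Y(\<theta>,\<theta>')/\<epsilon> + (2B\<^sub>3/\<epsilon>)\<bar>\<gamma>'\<^sub>t - \<gamma>\<^sub>t\<bar>\<close>.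
  As \<open>x \<mapsto> x\<^sup>+\<close> is 1-Lipschitz, integrating over the square and using Cauchy--Schwarz once
  more shows that \<open>I\<^sub>\<epsilon>\<close> is in fact Lipschitz:
  \<open>\<bar>I\<^sub>\<epsilon>(\<theta>',\<gamma>') - I\<^sub>\<epsilon>(\<theta>,\<gamma>)\<bar> \<le> 2T (T d\<^sub>Y(\<theta>,\<theta>')/\<epsilon> + (2B\<^sub>3/\<epsilon>) \<surd>T \<parallel>\<gamma>' - \<gamma>\<parallel>\<^sub>2)\<close>.
  That the integrand is measurable at all follows from the joint continuity of
  \<open>(t, z) \<mapsto> (A\<^sub>\<epsilon>\<theta>)\<^sub>t(z)\<close> and the measurability of left-continuous \<open>\<gamma>\<close>.\<close>

section \<open>Integrals of bounded functions on bounded sets\<close>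

lemma set_integrable_bounded:
  fixes f :: "'a::euclidean_space \<Rightarrow> real"
  assumes "f \<in> borel_measurable (restrict_space borel A)" "A \<in> sets borel" "bounded A"
    and "\<And>x. x \<in> A \<Longrightarrow> \<bar>f x\<bar> \<le> C"
  shows "set_integrable lborel A f"
proof -
  have "(\<lambda>x. indicator A x *\<^sub>R f x) \<in> borel_measurable borel"
    using assms(1,2) by (simp add: borel_measurable_restrict_space_iff)
  then show ?thesis
    unfolding set_integrable_def
    using assms(2,4) emeasure_bounded_finite[OF assms(3)]
    by (intro integrableI_bounded_set[where A=A and B=C]) (auto simp: indicator_def)
qed

lemma abs_set_integral_le_measure:
  fixes f :: "'a::euclidean_space \<Rightarrow> real"
  assumes "set_integrable lborel A f" "A \<in> sets borel" "bounded A"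
    and "\<And>x. x \<in> A \<Longrightarrow> \<bar>f x\<bar> \<le> C"
  shows "\<bar>LINT x:A|lborel. f x\<bar> \<le> C * measure lborel A"
proof -
  have "\<bar>LINT x:A|lborel. f x\<bar> \<le> (LINT x:A|lborel. \<bar>f x\<bar>)"
    using set_integral_norm_bound[OF assms(1)] by simp
  also have "\<dots> \<le> (LINT x:A|lborel. C)"
  proof (rule set_integral_mono)
    show "set_integrable lborel A (\<lambda>_. C)"
      by (rule set_integrable_bounded[where C="\<bar>C\<bar>"]) (use assms in auto)
  qed (use assms set_integrable_abs in auto)
  also have "\<dots> = C * measure lborel A"
    using assms(2) emeasure_bounded_finite[OF assms(3)] by (simp add: set_integral_const)
  finally show ?thesis .
qed

lemma le_sqrt_mult_sqrt_by_AM_GM: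
  fixes x q m :: real
  assumes "q \<ge> 0" "m \<ge> 0" and bound: "\<And>d. d > 0 \<Longrightarrow> x \<le> q / (2 * d) + d * m / 2"
  shows "x \<le> sqrt q * sqrt m"
proof (cases "q > 0 \<and> m > 0")
  case True
  define s r where "s = sqrt q" and "r = sqrt m"
  have "s > 0" "r > 0" "q = s\<^sup>2" "m = r\<^sup>2"
    using True by (auto simp: s_def r_def)
  have "x \<le> q / (2 * (s / r)) + s / r * m / 2"
    by (rule bound) (use \<open>s > 0\<close> \<open>r > 0\<close> in simp)
  also have "\<dots> = s * r"
    using \<open>s > 0\<close> \<open>r > 0\<close> by (simp add: \<open>q = s\<^sup>2\<close> \<open>m = r\<^sup>2\<close> field_simps power2_eq_square)
  finally show ?thesis by (simp add: s_def r_def)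
next
  case False
  then consider "q = 0" | "m = 0" using assms(1,2) by linarith
  then have "x \<le> 0"
  proof cases
    case 1
    show ?thesis
    proof (rule ccontr)
      assume "\<not> x \<le> 0"
      then have "x \<le> x * m / (2 * (m + 1))"
        using bound[of "x / (m + 1)"] 1 assms(2) by (simp add: algebra_simps)
      then show False
        using \<open>\<not> x \<le> 0\<close> assms(2) by (simp add: field_simps) (smt (verit) mult_nonneg_nonneg)
    qed
  next
    case 2
    show ?thesis
    proof (rule ccontr)
      assume "\<not> x \<le> 0"
      then have "x \<le> q * x / (2 * (q + x))"
        using bound[of "(q + x) / x"] 2 assms(1) by simp
      then show False
        using \<open>\<not> x \<le> 0\<close> assms(1)
        by (simp add: field_simps) (smt (verit) mult_nonneg_nonneg mult_pos_pos)
    qed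
  qed
  then show ?thesis using assms(1,2) by (smt (verit) mult_nonneg_nonneg real_sqrt_ge_zero)
qed

text \<open>Cauchy--Schwarz, obtained by integrating \<open>\<bar>a\<bar> \<le> a\<^sup>2/(2d) + d/2\<close> and optimising over \<open>d\<close>.\<close>
lemma set_integral_abs_le_sqrt_measure:
  fixes G :: "'a::euclidean_space \<Rightarrow> real"
  assumes "G \<in> borel_measurable (restrict_space borel S)" "S \<in> sets borel" "bounded S"
    and "\<And>x. x \<in> S \<Longrightarrow> \<bar>G x\<bar> \<le> C"
  shows "(LINT x:S|lborel. \<bar>G x\<bar>)
           \<le> sqrt (LINT x:S|lborel. (G x)\<^sup>2) * sqrt (measure lborel S)"
proof (rule le_sqrt_mult_sqrt_by_AM_GM)
  have int_abs: "set_integrable lborel S (\<lambda>x. \<bar>G x\<bar>)"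
    using assms by (intro set_integrable_abs set_integrable_bounded) auto
  have int_const: "set_integrable lborel S (\<lambda>_. c)" for c :: real
    by (rule set_integrable_bounded[where C="\<bar>c\<bar>"]) (use assms in auto)
  have int_sq: "set_integrable lborel S (\<lambda>x. (G x)\<^sup>2)"
  proof (rule set_integrable_bounded[where C="C\<^sup>2"])
    show "\<bar>(G x)\<^sup>2\<bar> \<le> C\<^sup>2" if "x \<in> S" for x
    proof -
      have "\<bar>G x\<bar> \<le> \<bar>C\<bar>" using assms(4)[OF that] by linarith
      then show ?thesis by (simp add: abs_le_square_iff)
    qed
  qed (use assms in auto)
  show "0 \<le> (LINT x:S|lborel. (G x)\<^sup>2)"
    unfolding set_lebesgue_integral_def by (rule Bochner_Integration.integral_nonneg) simp
  show "0 \<le> measure lborel S" by simp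
  fix d :: real assume "d > 0"
  have "(LINT x:S|lborel. \<bar>G x\<bar>) \<le> (LINT x:S|lborel. (G x)\<^sup>2 / (2 * d) + d / 2)"
  proof (rule set_integral_mono[OF int_abs])
    show "set_integrable lborel S (\<lambda>x. (G x)\<^sup>2 / (2 * d) + d / 2)"
      using int_sq int_const by (intro set_integral_add) auto
    show "\<bar>G x\<bar> \<le> (G x)\<^sup>2 / (2 * d) + d / 2" for x
    proof -
      have "0 \<le> (\<bar>G x\<bar> - d)\<^sup>2" by simp
      then show ?thesis using \<open>d > 0\<close> by (simp add: field_simps power2_eq_square)
    qed
  qed
  also have "\<dots> = (LINT x:S|lborel. (G x)\<^sup>2) / (2 * d) + d * measure lborel S / 2"
    using int_sq int_const assms(2) emeasure_bounded_finite[OF assms(3)]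
    by (subst set_integral_add) (auto simp: set_integral_const)
  finally show "(LINT x:S|lborel. \<bar>G x\<bar>)
      \<le> (LINT x:S|lborel. (G x)\<^sup>2) / (2 * d) + d * measure lborel S / 2" .
qed

lemma borel_measurable_restrict_fst:
  fixes f :: "real \<Rightarrow> real"
  assumes "f \<in> borel_measurable (restrict_space borel A)"
  shows "(\<lambda>p. f (fst p)) \<in> borel_measurable (restrict_space borel (A \<times> B))"
proof -
  have "fst \<in> restrict_space borel (A \<times> B) \<rightarrow>\<^sub>M restrict_space borel A"
    by (auto intro!: measurable_restrict_space3 borel_measurable_continuous_onI continuous_intros)
  then show ?thesis using assms by (rule measurable_compose)
qed

lemma borel_measurable_restrict_snd:
  fixes g :: "real \<Rightarrow> real"
  assumes "g \<in> borel_measurable (restrict_space borel B)"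
  shows "(\<lambda>p. g (snd p)) \<in> borel_measurable (restrict_space borel (A \<times> B))"
proof -
  have "snd \<in> restrict_space borel (A \<times> B) \<rightarrow>\<^sub>M restrict_space borel B"
    by (auto intro!: measurable_restrict_space3 borel_measurable_continuous_onI continuous_intros)
  then show ?thesis using assms by (rule measurable_compose)
qed

lemma sets_borel_Times:
  fixes A :: "'a::second_countable_topology set" and B :: "'b::second_countable_topology set"
  shows "A \<in> sets borel \<Longrightarrow> B \<in> sets borel \<Longrightarrow> A \<times> B \<in> sets borel"
  using pair_measureI[of A borel B borel] unfolding borel_prod .

lemma set_integral_Times_mult:
  fixes f g :: "real \<Rightarrow> real"
  assumes sets: "A \<in> sets borel" "B \<in> sets borel" "bounded A" "bounded B"
    and meas: "f \<in> borel_measurable (restrict_space borel A)" "g \<in> borel_measurable (restrict_space borel B)"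
    and bound: "\<And>x. x \<in> A \<Longrightarrow> \<bar>f x\<bar> \<le> C" "\<And>y. y \<in> B \<Longrightarrow> \<bar>g y\<bar> \<le> D"
  shows "(LINT p:A \<times> B|lborel. f (fst p) * g (snd p)) = (LINT x:A|lborel. f x) * (LINT y:B|lborel. g y)"
proof -
  let ?k = "\<lambda>(x, y). (indicator A x * f x) * (indicator B y * g y)"
  have k_eq: "(\<lambda>p. indicator (A \<times> B) p *\<^sub>R (f (fst p) * g (snd p))) = ?k"
    by (auto simp: fun_eq_iff indicator_def)
  have "set_integrable lborel (A \<times> B) (\<lambda>p. f (fst p) * g (snd p))"
  proof (rule set_integrable_bounded[where C="\<bar>C\<bar> * \<bar>D\<bar>"])
    show "\<bar>f (fst p) * g (snd p)\<bar> \<le> \<bar>C\<bar> * \<bar>D\<bar>" if "p \<in> A \<times> B" for p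
      using bound(1)[of "fst p"] bound(2)[of "snd p"] that
      by (auto simp: abs_mult intro!: mult_mono)
  qed (use sets meas in \<open>auto intro: borel_measurable_times borel_measurable_restrict_fst
        borel_measurable_restrict_snd bounded_Times sets_borel_Times\<close>)
  then have k_int: "integrable (lborel \<Otimes>\<^sub>M lborel) ?k"
    unfolding set_integrable_def lborel_prod k_eq .
  have "(LINT p:A \<times> B|lborel. f (fst p) * g (snd p)) = integral\<^sup>L (lborel \<Otimes>\<^sub>M lborel) ?k"
    unfolding set_lebesgue_integral_def lborel_prod k_eq ..
  also have "\<dots> = (\<integral>x. \<integral>y. (indicator A x * f x) * (indicator B y * g y) \<partial>lborel \<partial>lborel)"
    using lborel_pair.integral_fst[OF k_int] by simp
  also have "\<dots> = (LINT x:A|lborel. f x) * (LINT y:B|lborel. g y)"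
    by (simp add: set_lebesgue_integral_def)
  finally show ?thesis .
qed

lemma set_integral_square_fst:
  fixes b :: "real \<Rightarrow> real"
  assumes "I \<in> sets borel" "bounded I" "b \<in> borel_measurable (restrict_space borel I)"
    and "\<And>t. t \<in> I \<Longrightarrow> \<bar>b t\<bar> \<le> M"
  shows "(LINT p:I \<times> I|lborel. b (fst p)) = measure lborel I * (LINT t:I|lborel. b t)"
  using set_integral_Times_mult[of I I b "\<lambda>_. 1" M 1] assms emeasure_bounded_finite[OF assms(2)]
  by (simp add: set_integral_const)

lemma set_integral_square_snd:
  fixes b :: "real \<Rightarrow> real"
  assumes "I \<in> sets borel" "bounded I" "b \<in> borel_measurable (restrict_space borel I)"
    and "\<And>t. t \<in> I \<Longrightarrow> \<bar>b t\<bar> \<le> M"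
  shows "(LINT p:I \<times> I|lborel. b (snd p)) = measure lborel I * (LINT t:I|lborel. b t)"
  using set_integral_Times_mult[of I I "\<lambda>_. 1" b 1 M] assms emeasure_bounded_finite[OF assms(2)]
  by (simp add: set_integral_const)

section \<open>The window average \<open>A_eps\<close>\<close>

lemma Y_B_borel_measurable: "f \<in> Y_B B \<Longrightarrow> f \<in> borel_measurable (restrict_space borel {0..1})"
  unfolding Y_B_def by (auto intro: borel_measurable_mono_on_fnc)

lemma Y_B_abs_le: "f \<in> Y_B B \<Longrightarrow> z \<in> {0..1} \<Longrightarrow> \<bar>f z\<bar> \<le> B"
  unfolding Y_B_def by auto

lemma L2dist_sq: "(L2dist a b f g)\<^sup>2 = (LINT w:{a<..<b}|lborel. (f w - g w)\<^sup>2)"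
proof -
  have "0 \<le> (LINT w:{a<..<b}|lborel. (f w - g w)\<^sup>2)"
    unfolding set_lebesgue_integral_def by (rule Bochner_Integration.integral_nonneg) simp
  then show ?thesis unfolding L2dist_def by simp
qed

lemma set_integral_abs_diff_le_L2dist:
  assumes "f \<in> Y_B B" "f' \<in> Y_B B"
  shows "(LINT w:{0..<1}|lborel. \<bar>f w - f' w\<bar>) \<le> L2dist 0 1 f f'"
proof -
  have meas: "(\<lambda>w. f w - f' w) \<in> borel_measurable (restrict_space borel {0<..<1})"
    using assms by (intro borel_measurable_diff measurable_restrict_mono[OF Y_B_borel_measurable]) auto
  have "(LINT w:{0..<1}|lborel. \<bar>f w - f' w\<bar>) = (LINT w:{0<..<1}|lborel. \<bar>f w - f' w\<bar>)"
    using interval_integral_Ico[of 0 1 "\<lambda>w. \<bar>f w - f' w\<bar>"]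
      interval_integral_Ioo[of "ereal 0" "ereal 1" "\<lambda>w. \<bar>f w - f' w\<bar>"] by simp
  also have "\<dots> \<le> sqrt (LINT w:{0<..<1}|lborel. (f w - f' w)\<^sup>2) * sqrt (measure lborel {0<..<1::real})"
  proof (rule set_integral_abs_le_sqrt_measure[where C="2 * B", OF meas])
    show "\<bar>f w - f' w\<bar> \<le> 2 * B" if "w \<in> {0<..<1}" for w
      using Y_B_abs_le[OF assms(1), of w] Y_B_abs_le[OF assms(2), of w] that by auto
  qed auto
  also have "\<dots> = L2dist 0 1 f f'"
    by (simp add: L2dist_def)
  finally show ?thesis .
qed

lemma L2dist_Y_B_le:
  assumes "f \<in> Y_B B" "f' \<in> Y_B B"
  shows "L2dist 0 1 f f' \<le> 2 * B"
proof -
  have "B \<ge> 0" using Y_B_abs_le[OF assms(1), of 0] by simp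
  have bound: "\<bar>(f w - f' w)\<^sup>2\<bar> \<le> (2 * B)\<^sup>2" if "w \<in> {0<..<1}" for w
  proof -
    have "\<bar>f w - f' w\<bar> \<le> \<bar>2 * B\<bar>"
      using Y_B_abs_le[OF assms(1), of w] Y_B_abs_le[OF assms(2), of w] that \<open>B \<ge> 0\<close> by auto
    then show ?thesis by (simp only: abs_le_square_iff abs_power2)
  qed
  have meas: "(\<lambda>w. (f w - f' w)\<^sup>2) \<in> borel_measurable (restrict_space borel {0<..<1})"
    using assms by (intro borel_measurable_power borel_measurable_diff
        measurable_restrict_mono[OF Y_B_borel_measurable]) auto
  have "(L2dist 0 1 f f')\<^sup>2 \<le> \<bar>LINT w:{0<..<1}|lborel. (f w - f' w)\<^sup>2\<bar>"
    unfolding L2dist_sq by (rule abs_ge_self)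
  also have "\<dots> \<le> (2 * B)\<^sup>2 * measure lborel {0<..<1::real}"
    by (rule abs_set_integral_le_measure[OF set_integrable_bounded[OF meas]]) (use bound in auto)
  also have "\<dots> = (2 * B)\<^sup>2" by simp
  finally show ?thesis
    by (rule power2_le_imp_le) (use \<open>B \<ge> 0\<close> in simp)
qed

text \<open>Padding by \<open>0\<close> to the left of \<open>0\<close> makes the profile bounded and measurable on the whole
  line; it is invisible to \<open>A_eps\<close>, whose windows start at \<open>z \<ge> 0\<close>.\<close>
definition padded_profile :: "real \<Rightarrow> (real \<Rightarrow> real) \<Rightarrow> real \<Rightarrow> real" where
  "padded_profile B f w = (if 1 \<le> w then B else if 0 \<le> w then f w else 0)"

lemma padded_profile_borel_measurable:
  assumes "f \<in> Y_B B"
  shows "padded_profile B f \<in> borel_measurable borel"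
proof -
  have "(\<lambda>w. if w \<in> {0..<1} then f w else if 1 \<le> w then B else 0) \<in> borel_measurable borel"
    by (subst measurable_If_restrict_space_iff)
      (auto intro: measurable_restrict_mono[OF Y_B_borel_measurable[OF assms]] measurable_restrict_space1)
  moreover have "padded_profile B f = (\<lambda>w. if w \<in> {0..<1} then f w else if 1 \<le> w then B else 0)"
    by (auto simp: fun_eq_iff padded_profile_def)
  ultimately show ?thesis by simp
qed

lemma padded_profile_abs_le: "f \<in> Y_B B \<Longrightarrow> \<bar>padded_profile B f w\<bar> \<le> B"
  using Y_B_abs_le[of f B 0] Y_B_abs_le[of f B w] by (auto simp: padded_profile_def)

lemma A_eps_eq_padded_profile:
  "0 \<le> z \<Longrightarrow> A_eps B eps th t z = (LINT w:{z..z+eps}|lborel. padded_profile B (th t) w) / eps"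
  unfolding A_eps_def
  by (intro arg_cong[where f="\<lambda>x. x / eps"] set_lebesgue_integral_cong) (auto simp: padded_profile_def)

lemma abs_A_eps_le:
  assumes "th t \<in> Y_B B" "eps > 0" "0 \<le> z"
  shows "\<bar>A_eps B eps th t z\<bar> \<le> B"
proof -
  have "\<bar>LINT w:{z..z+eps}|lborel. padded_profile B (th t) w\<bar> \<le> B * measure lborel {z..z+eps}"
    using assms(1) by (intro abs_set_integral_le_measure set_integrable_bounded[where C=B]
        measurable_restrict_space1 padded_profile_borel_measurable padded_profile_abs_le) auto
  then show ?thesis
    using assms by (simp add: A_eps_eq_padded_profile abs_divide divide_le_eq)
qed

lemma window_integral_shift_le:
  fixes f :: "real \<Rightarrow> real"
  assumes meas: "f \<in> borel_measurable borel" and bound: "\<And>x. \<bar>f x\<bar> \<le> C" and "e \<ge> 0"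
  shows "\<bar>(LINT w:{z..z+e}|lborel. f w) - (LINT w:{z'..z'+e}|lborel. f w)\<bar> \<le> 2 * C * \<bar>z - z'\<bar>"
proof -
  let ?J = "\<lambda>a b. LBINT w=ereal a..ereal b. f w"
  have integrable: "interval_lebesgue_integrable lborel (ereal a) (ereal b) f" for a b
    unfolding interval_lebesgue_integrable_def
    by (auto intro!: set_integrable_bounded[where C=C] measurable_restrict_space1 meas bound)
  have split: "?J a b + ?J b c = ?J a c" for a b c
    by (rule interval_integral_sum) (simp add: min_def max_def integrable)
  have abs_J_le: "\<bar>?J a b\<bar> \<le> C * \<bar>b - a\<bar>" for a b
  proof (induction a b rule: linorder_wlog)
    case (le a b)
    have "\<bar>LINT w:{a..b}|lborel. f w\<bar> \<le> C * measure lborel {a..b}"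
      by (intro abs_set_integral_le_measure set_integrable_bounded[where C=C]
          measurable_restrict_space1 meas bound) auto
    then show ?case using le by (simp add: interval_integral_Icc)
  next
    case (sym a b)
    then show ?case by (simp add: interval_integral_endpoints_reverse[of "ereal b"] abs_minus_commute)
  qed
  have "(LINT w:{z..z+e}|lborel. f w) - (LINT w:{z'..z'+e}|lborel. f w) = ?J z (z+e) - ?J z' (z'+e)"
    using \<open>e \<ge> 0\<close> by (simp add: interval_integral_Icc)
  also have "\<dots> = ?J z z' - ?J (z+e) (z'+e)"
    using split[of z z' "z'+e"] split[of z "z+e" "z'+e"] by linarith
  finally show ?thesis
    using abs_J_le[of z z'] abs_J_le[of "z+e" "z'+e"] by (simp add: abs_minus_commute)
qed

lemma A_eps_lipschitz:
  assumes "th t \<in> Y_B B" "eps > 0" "0 \<le> z" "0 \<le> z'"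
  shows "\<bar>A_eps B eps th t z - A_eps B eps th t z'\<bar> \<le> 2 * B / eps * \<bar>z - z'\<bar>"
proof -
  have "\<bar>(LINT w:{z..z+eps}|lborel. padded_profile B (th t) w)
          - (LINT w:{z'..z'+eps}|lborel. padded_profile B (th t) w)\<bar> \<le> 2 * B * \<bar>z - z'\<bar>"
    using assms by (intro window_integral_shift_le padded_profile_borel_measurable padded_profile_abs_le) auto
  then show ?thesis
    using assms by (simp add: A_eps_eq_padded_profile flip: diff_divide_distrib)
      (simp add: abs_divide divide_le_eq field_simps)
qed

lemma window_integral_padded_diff_le:
  assumes f: "f \<in> Y_B B" and f': "f' \<in> Y_B B"
  shows "\<bar>LINT w:{z..z+e}|lborel. padded_profile B f w - padded_profile B f' w\<bar> \<le> L2dist 0 1 f f'"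
proof -
  let ?D = "\<lambda>w. padded_profile B f w - padded_profile B f' w"
  have D_eq: "?D w = indicator {0..<1} w * (f w - f' w)" for w
    by (simp add: padded_profile_def indicator_def)
  have D_int: "set_integrable lborel A ?D" if "bounded A" "A \<in> sets borel" for A
  proof (rule set_integrable_bounded[where C="2 * B"])
    show "\<bar>?D w\<bar> \<le> 2 * B" for w
      using padded_profile_abs_le[OF f, of w] padded_profile_abs_le[OF f', of w] by linarith
  qed (use that f f' in \<open>auto intro!: measurable_restrict_space1 borel_measurable_diff
      padded_profile_borel_measurable\<close>)
  have "\<bar>LINT w:{z..z+e}|lborel. ?D w\<bar> \<le> (LINT w:{z..z+e}|lborel. \<bar>?D w\<bar>)"
    using set_integral_norm_bound[OF D_int] by simp
  also have "\<dots> \<le> (LINT w:{0..<1}|lborel. \<bar>f w - f' w\<bar>)"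
    unfolding set_lebesgue_integral_def
  proof (rule integral_mono)
    show "integrable lborel (\<lambda>w. indicator {z..z+e} w *\<^sub>R \<bar>?D w\<bar>)"
      using set_integrable_abs[OF D_int, of "{z..z+e}"] unfolding set_integrable_def by simp
    have "(\<lambda>w. indicator {0..<1} w *\<^sub>R \<bar>f w - f' w\<bar>) = (\<lambda>w. indicator {0..<1} w *\<^sub>R \<bar>?D w\<bar>)"
      by (auto simp: fun_eq_iff D_eq indicator_def)
    then show "integrable lborel (\<lambda>w. indicator {0..<1} w *\<^sub>R \<bar>f w - f' w\<bar>)"
      using set_integrable_abs[OF D_int, of "{0..<1}"] unfolding set_integrable_def by simp
    show "indicator {z..z+e} w *\<^sub>R \<bar>?D w\<bar> \<le> indicator {0..<1} w *\<^sub>R \<bar>f w - f' w\<bar>" for w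
      by (auto simp: D_eq indicator_def)
  qed
  also have "\<dots> \<le> L2dist 0 1 f f'"
    by (rule set_integral_abs_diff_le_L2dist[OF f f'])
  finally show ?thesis .
qed

lemma A_eps_profile_diff_le:
  assumes "th t \<in> Y_B B" "th' t' \<in> Y_B B" "eps > 0" "0 \<le> z"
  shows "\<bar>A_eps B eps th t z - A_eps B eps th' t' z\<bar> \<le> L2dist 0 1 (th t) (th' t') / eps"
proof -
  let ?D = "\<lambda>w. padded_profile B (th t) w - padded_profile B (th' t') w"
  have int: "set_integrable lborel {z..z+eps} (padded_profile B f)" if "f \<in> Y_B B" for f
    using that by (intro set_integrable_bounded[where C=B] measurable_restrict_space1
        padded_profile_borel_measurable padded_profile_abs_le) auto
  have "A_eps B eps th t z - A_eps B eps th' t' z = (LINT w:{z..z+eps}|lborel. ?D w) / eps"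
    using assms(4) set_integral_diff(2)[OF int[OF assms(1)] int[OF assms(2)]]
    by (simp add: A_eps_eq_padded_profile diff_divide_distrib)
  then have "\<bar>A_eps B eps th t z - A_eps B eps th' t' z\<bar> = \<bar>LINT w:{z..z+eps}|lborel. ?D w\<bar> / eps"
    using assms(3) by (simp add: abs_divide)
  also have "\<dots> \<le> L2dist 0 1 (th t) (th' t') / eps"
    using assms(3) by (intro divide_right_mono window_integral_padded_diff_le assms(1,2)) simp
  finally show ?thesis .
qed

lemma A_eps_diff_le:
  assumes "th t \<in> Y_B B" "th' t' \<in> Y_B B" "eps > 0" "0 \<le> z" "0 \<le> z'"
  shows "\<bar>A_eps B eps th t z - A_eps B eps th' t' z'\<bar>
           \<le> L2dist 0 1 (th t) (th' t') / eps + 2 * B / eps * \<bar>z - z'\<bar>"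
proof -
  have "\<bar>A_eps B eps th t z - A_eps B eps th' t' z\<bar> \<le> L2dist 0 1 (th t) (th' t') / eps"
    by (rule A_eps_profile_diff_le) (use assms in auto)
  moreover have "\<bar>A_eps B eps th' t' z - A_eps B eps th' t' z'\<bar> \<le> 2 * B / eps * \<bar>z - z'\<bar>"
    by (rule A_eps_lipschitz) (use assms in auto)
  ultimately show ?thesis
    using dist_triangle[of "A_eps B eps th t z" "A_eps B eps th' t' z'" "A_eps B eps th' t' z"]
    unfolding dist_real_def by linarith
qed

section \<open>Dependence on time\<close>

text \<open>Left-continuity lets \<open>g\<close> be approximated pointwise by the step functions
  \<open>t \<mapsto> g (s\<^sub>n t)\<close> with \<open>s\<^sub>n t = (\<lceil>(n+1) t\<rceil> - 1) / (n+1) \<in> [t - 1/(n+1), t)\<close>.\<close>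
lemma borel_measurable_left_continuous_on_Ioo:
  fixes g :: "real \<Rightarrow> real"
  assumes left_cont: "\<And>t. t \<in> {a<..<b} \<Longrightarrow> (g \<longlongrightarrow> g t) (at_left t)"
  shows "g \<in> borel_measurable (restrict_space borel {a<..<b})"
proof -
  define s where "s n t = (of_int \<lceil>real (Suc n) * t\<rceil> - 1) / real (Suc n)" for n t
  define u where "u n t = (if a < s n t then g (s n t) else 0)" for n t
  have s_bounds: "t - 1 / real (Suc n) \<le> s n t \<and> s n t < t" for n t
  proof -
    define N c :: real where "N = real (Suc n)" and "c = of_int \<lceil>real (Suc n) * t\<rceil>"
    have "N > 0" "N * t \<le> c" "c < N * t + 1"
      using ceiling_correct[of "real (Suc n) * t"] by (auto simp: N_def c_def)
    moreover have "s n t = (c - 1) / N" "t - 1 / N = (N * t - 1) / N" "t = N * t / N"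
      using \<open>N > 0\<close> by (auto simp: s_def N_def c_def field_simps)
    ultimately show ?thesis
      by (metis N_def add_diff_cancel_right' diff_strict_right_mono divide_right_mono
          divide_strict_right_mono diff_right_mono less_imp_le)
  qed
  have u_meas: "u n \<in> borel_measurable borel" for n
  proof -
    define \<phi> :: "int \<Rightarrow> real" where
      "\<phi> k = (if a < (of_int k - 1) / real (Suc n) then g ((of_int k - 1) / real (Suc n)) else 0)" for k
    have "\<phi> \<in> count_space UNIV \<rightarrow>\<^sub>M borel" by simp
    then have "(\<lambda>t. \<phi> \<lceil>real (Suc n) * t\<rceil>) \<in> borel_measurable borel" by measurable
    moreover have "u n = (\<lambda>t. \<phi> \<lceil>real (Suc n) * t\<rceil>)"
      by (simp add: fun_eq_iff u_def s_def \<phi>_def)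
    ultimately show ?thesis by simp
  qed
  have lim: "(\<lambda>n. u n t) \<longlonglongrightarrow> g t" if t: "t \<in> {a<..<b}" for t
  proof -
    have "(\<lambda>n. s n t) \<longlonglongrightarrow> t"
    proof (rule tendsto_sandwich[where f="\<lambda>n. t - 1 / real (Suc n)" and h="\<lambda>_. t"])
      show "(\<lambda>n. t - 1 / real (Suc n)) \<longlonglongrightarrow> t"
        using tendsto_diff[OF tendsto_const LIMSEQ_inverse_real_of_nat, of t]
        by (simp add: inverse_eq_divide)
      show "\<forall>\<^sub>F n in sequentially. t - 1 / real (Suc n) \<le> s n t"
        using s_bounds by simp
      show "\<forall>\<^sub>F n in sequentially. s n t \<le> t"
        using s_bounds by (simp add: less_imp_le)
    qed simp
    moreover have "eventually (\<lambda>n. s n t < t) sequentially" using s_bounds by simp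
    ultimately have "filterlim (\<lambda>n. s n t) (at_left t) sequentially"
      by (rule tendsto_imp_filterlim_at_left)
    then have "(\<lambda>n. g (s n t)) \<longlonglongrightarrow> g t"
      using left_cont[OF t] by (rule filterlim_compose[rotated])
    moreover have "eventually (\<lambda>n. g (s n t) = u n t) sequentially"
      using order_tendstoD(1)[OF \<open>(\<lambda>n. s n t) \<longlonglongrightarrow> t\<close>, of a] t
      by (auto elim: eventually_mono simp: u_def)
    ultimately show ?thesis by (rule Lim_transform_eventually)
  qed
  show ?thesis
  proof (rule borel_measurable_LIMSEQ_real[where u=u])
    show "u n \<in> borel_measurable (restrict_space borel {a<..<b})" for n
      by (rule measurable_restrict_space1[OF u_meas])
  qed (simp add: lim)
qed

lemma X_B_borel_measurable: "g \<in> X_B T B1 \<Longrightarrow> g \<in> borel_measurable (restrict_space borel {0<..<T})"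
  unfolding X_B_def by (auto intro: borel_measurable_left_continuous_on_Ioo)

lemma X_B_range: "g \<in> X_B T B1 \<Longrightarrow> t \<in> {0<..<T} \<Longrightarrow> 0 \<le> g t \<and> g t \<le> 1"
  unfolding X_B_def by auto

lemma X_B_set_integral_abs_diff_le:
  assumes g: "g \<in> X_B T B1" and g': "g' \<in> X_B T B1" and "T \<ge> 0"
  shows "(LINT t:{0<..<T}|lborel. \<bar>g' t - g t\<bar>) \<le> sqrt T * L2dist 0 T g g'"
proof -
  have "(LINT t:{0<..<T}|lborel. \<bar>g' t - g t\<bar>)
      \<le> sqrt (LINT t:{0<..<T}|lborel. (g' t - g t)\<^sup>2) * sqrt (measure lborel {0<..<T})"
  proof (rule set_integral_abs_le_sqrt_measure[where C=1])
    show "(\<lambda>t. g' t - g t) \<in> borel_measurable (restrict_space borel {0<..<T})"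
      using X_B_borel_measurable[OF g] X_B_borel_measurable[OF g'] by (rule borel_measurable_diff[rotated])
    show "\<bar>g' t - g t\<bar> \<le> 1" if "t \<in> {0<..<T}" for t
      using X_B_range[OF g that] X_B_range[OF g' that] by linarith
  qed auto
  also have "\<dots> = L2dist 0 T g g' * sqrt T"
    using assms(3) by (simp add: L2dist_def power2_commute)
  finally show ?thesis by (simp add: mult.commute)
qed

lemma Yspace_profile: "th \<in> Yspace T B \<Longrightarrow> t \<in> {0..<T} \<Longrightarrow> th t \<in> Y_B B"
  unfolding Yspace_def by auto

lemma L2dist_le_Ydist:
  assumes "th \<in> Yspace T B" "th' \<in> Yspace T B" "t \<in> {0..<T}"
  shows "L2dist 0 1 (th t) (th' t) \<le> Ydist T th th'"
  unfolding Ydist_def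
proof (rule cSUP_upper[OF assms(3)])
  show "bdd_above ((\<lambda>t. L2dist 0 1 (th t) (th' t)) ` {0..<T})"
    using assms(1,2) by (intro bdd_aboveI2[where M="2 * B"] L2dist_Y_B_le Yspace_profile) auto
qed

lemma A_eps_continuous_on:
  assumes th: "th \<in> Yspace T B" and "eps > 0"
  shows "continuous_on ({0..<T} \<times> {0..}) (\<lambda>p. A_eps B eps th (fst p) (snd p))"
  unfolding continuous_on_iff
proof (intro ballI allI impI)
  fix p and e :: real
  assume p: "p \<in> {0..<T} \<times> {0::real..}" and "e > 0"
  have "B \<ge> 0"
    using Y_B_abs_le[OF Yspace_profile[OF th], of "fst p" 0] p by auto
  have "\<forall>e>0. \<exists>d>0. \<forall>s\<in>{0..<T}. \<bar>s - fst p\<bar> < d \<longrightarrow> L2dist 0 1 (th s) (th (fst p)) < e"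
    using th p unfolding Yspace_def by auto
  moreover have "e * eps / 2 > 0" using \<open>e > 0\<close> \<open>eps > 0\<close> by simp
  ultimately obtain d1 where "d1 > 0" and d1: "\<And>s. s \<in> {0..<T} \<Longrightarrow> \<bar>s - fst p\<bar> < d1 \<Longrightarrow>
      L2dist 0 1 (th s) (th (fst p)) < e * eps / 2"
    by blast
  define d where "d = min d1 (e * eps / (4 * B + 1))"
  have "d > 0" using \<open>d1 > 0\<close> \<open>e > 0\<close> \<open>eps > 0\<close> \<open>B \<ge> 0\<close> by (simp add: d_def)
  show "\<exists>d>0. \<forall>q\<in>{0..<T} \<times> {0::real..}. dist q p < d \<longrightarrow>
      dist (A_eps B eps th (fst q) (snd q)) (A_eps B eps th (fst p) (snd p)) < e"
  proof (intro exI[of _ d] conjI \<open>d > 0\<close> ballI impI)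
    fix q assume q: "q \<in> {0..<T} \<times> {0::real..}" and "dist q p < d"
    then have "\<bar>fst q - fst p\<bar> < d" "\<bar>snd q - snd p\<bar> < d"
      using dist_fst_le[of q p] dist_snd_le[of q p] by (auto simp: dist_real_def)
    have "L2dist 0 1 (th (fst q)) (th (fst p)) / eps < e / 2"
      using d1[of "fst q"] q \<open>\<bar>fst q - fst p\<bar> < d\<close> \<open>eps > 0\<close> by (auto simp: d_def field_simps)
    moreover have "2 * B / eps * \<bar>snd q - snd p\<bar> \<le> e / 2"
    proof -
      have "2 * B / eps * \<bar>snd q - snd p\<bar> \<le> 2 * B / eps * (e * eps / (4 * B + 1))"
        using \<open>\<bar>snd q - snd p\<bar> < d\<close> \<open>B \<ge> 0\<close> \<open>eps > 0\<close> by (intro mult_left_mono) (auto simp: d_def)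
      also have "\<dots> \<le> e / 2"
        using \<open>B \<ge> 0\<close> \<open>e > 0\<close> \<open>eps > 0\<close> by (simp add: field_simps)
      finally show ?thesis .
    qed
    moreover have "\<bar>A_eps B eps th (fst q) (snd q) - A_eps B eps th (fst p) (snd p)\<bar>
        \<le> L2dist 0 1 (th (fst q)) (th (fst p)) / eps + 2 * B / eps * \<bar>snd q - snd p\<bar>"
      using p q \<open>eps > 0\<close> by (intro A_eps_diff_le Yspace_profile[OF th]) auto
    ultimately show "dist (A_eps B eps th (fst q) (snd q)) (A_eps B eps th (fst p) (snd p)) < e"
      unfolding dist_real_def by linarith
  qed
qed

lemma A_eps_comp_borel_measurable:
  assumes th: "th \<in> Yspace T B" and "eps > 0"
    and g: "g \<in> borel_measurable (restrict_space borel {0<..<T})"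
    and g_nonneg: "\<And>t. t \<in> {0<..<T} \<Longrightarrow> 0 \<le> g t"
  shows "(\<lambda>t. A_eps B eps th t (g t)) \<in> borel_measurable (restrict_space borel {0<..<T})"
proof -
  let ?S = "{0..<T} \<times> {0::real..}"
  have pair: "(\<lambda>t. (t, g t)) \<in> restrict_space borel {0<..<T} \<rightarrow>\<^sub>M restrict_space borel ?S"
  proof (rule measurable_restrict_space2)
    show "(\<lambda>t. (t, g t)) \<in> space (restrict_space borel {0<..<T}) \<rightarrow> ?S"
      using g_nonneg by auto
    show "(\<lambda>t. (t, g t)) \<in> borel_measurable (restrict_space borel {0<..<T})"
      by (rule borel_measurable_Pair[OF _ g]) (simp add: measurable_restrict_space1)
  qed
  have "(\<lambda>p. A_eps B eps th (fst p) (snd p)) \<in> borel_measurable (restrict_space borel ?S)"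
    by (rule borel_measurable_continuous_on_restrict[OF A_eps_continuous_on[OF th \<open>eps > 0\<close>]])
  from measurable_compose[OF pair this] show ?thesis by simp
qed

section \<open>The increment functional\<close>

definition increment_integrand :: "(real \<Rightarrow> real) \<Rightarrow> real \<times> real \<Rightarrow> real" where
  "increment_integrand a p = (if fst p < snd p then max 0 (a (fst p) - a (snd p)) else 0)"

definition increment_integral :: "real set \<Rightarrow> (real \<Rightarrow> real) \<Rightarrow> real" where
  "increment_integral I a = (LINT p:I \<times> I|lborel. increment_integrand a p)"

lemma I_eps_eq_increment_integral:
  "I_eps T B3 eps th g = increment_integral {0<..<T} (\<lambda>t. A_eps B3 eps th t (g t))"
  unfolding I_eps_def increment_integral_def increment_integrand_def ..

lemma abs_increment_integrand_diff_le:
  "\<bar>increment_integrand a' p - increment_integrand a p\<bar>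
     \<le> \<bar>a' (fst p) - a (fst p)\<bar> + \<bar>a' (snd p) - a (snd p)\<bar>"
  unfolding increment_integrand_def by auto

lemma increment_integrand_set_integrable:
  fixes a :: "real \<Rightarrow> real"
  assumes I: "I \<in> sets borel" "bounded I" and a: "a \<in> borel_measurable (restrict_space borel I)"
    and bound: "\<And>t. t \<in> I \<Longrightarrow> \<bar>a t\<bar> \<le> M"
  shows "set_integrable lborel (I \<times> I) (increment_integrand a)"
proof (rule set_integrable_bounded[where C="2 * M"])
  have "{p::real \<times> real. fst p < snd p} \<in> sets borel"
    by (intro borel_open open_Collect_less continuous_intros)
  then have "{p. fst p < snd p} \<inter> space (restrict_space borel (I \<times> I))
      \<in> sets (restrict_space borel (I \<times> I))"
    using sets_borel_Times[OF I(1) I(1)] by (auto simp: sets_restrict_space_iff)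
  then have "(\<lambda>p. if p \<in> {p. fst p < snd p} then max 0 (a (fst p) - a (snd p)) else 0)
      \<in> borel_measurable (restrict_space borel (I \<times> I))"
    by (intro measurable_If_set borel_measurable_max borel_measurable_diff borel_measurable_const
        borel_measurable_restrict_fst borel_measurable_restrict_snd a)
  then show "increment_integrand a \<in> borel_measurable (restrict_space borel (I \<times> I))"
    by (simp add: increment_integrand_def[abs_def])
  show "\<bar>increment_integrand a p\<bar> \<le> 2 * M" if "p \<in> I \<times> I" for p
    using bound[of "fst p"] bound[of "snd p"] that by (auto simp: increment_integrand_def)
qed (use I in \<open>auto intro: sets_borel_Times bounded_Times\<close>)

lemma increment_integral_diff_le:
  fixes a a' b :: "real \<Rightarrow> real"
  assumes I: "I \<in> sets borel" "bounded I"
    and meas: "a \<in> borel_measurable (restrict_space borel I)"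
      "a' \<in> borel_measurable (restrict_space borel I)" "b \<in> borel_measurable (restrict_space borel I)"
    and bound: "\<And>t. t \<in> I \<Longrightarrow> \<bar>a t\<bar> \<le> M" "\<And>t. t \<in> I \<Longrightarrow> \<bar>a' t\<bar> \<le> M"
      "\<And>t. t \<in> I \<Longrightarrow> b t \<le> M"
    and close: "\<And>t. t \<in> I \<Longrightarrow> \<bar>a' t - a t\<bar> \<le> b t"
  shows "\<bar>increment_integral I a' - increment_integral I a\<bar>
           \<le> 2 * measure lborel I * (LINT t:I|lborel. b t)"
proof -
  have b_abs: "\<bar>b t\<bar> \<le> M" if "t \<in> I" for t
    using close[OF that] bound(3)[OF that] by linarith
  have int_a: "set_integrable lborel (I \<times> I) (increment_integrand a)"
    and int_a': "set_integrable lborel (I \<times> I) (increment_integrand a')"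
    using I meas bound by (auto intro: increment_integrand_set_integrable)
  have int_b: "set_integrable lborel (I \<times> I) (\<lambda>p. b (fst p))"
    "set_integrable lborel (I \<times> I) (\<lambda>p. b (snd p))"
    using I b_abs by (auto intro!: set_integrable_bounded[where C=M] sets_borel_Times bounded_Times
        borel_measurable_restrict_fst borel_measurable_restrict_snd meas(3))
  have "\<bar>increment_integral I a' - increment_integral I a\<bar>
      = \<bar>LINT p:I \<times> I|lborel. increment_integrand a' p - increment_integrand a p\<bar>"
    unfolding increment_integral_def using set_integral_diff(2)[OF int_a' int_a] by simp
  also have "\<dots> \<le> (LINT p:I \<times> I|lborel. \<bar>increment_integrand a' p - increment_integrand a p\<bar>)"
    using set_integral_norm_bound[OF set_integral_diff(1)[OF int_a' int_a]] by simp
  also have "\<dots> \<le> (LINT p:I \<times> I|lborel. b (fst p) + b (snd p))"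
  proof (rule set_integral_mono)
    show "\<bar>increment_integrand a' p - increment_integrand a p\<bar> \<le> b (fst p) + b (snd p)"
      if "p \<in> I \<times> I" for p
      using abs_increment_integrand_diff_le[of a' p a] close[of "fst p"] close[of "snd p"] that
      by (auto simp: mem_Times_iff)
  qed (use set_integrable_abs[OF set_integral_diff(1)[OF int_a' int_a]] int_b in auto)
  also have "\<dots> = 2 * measure lborel I * (LINT t:I|lborel. b t)"
    using I meas(3) b_abs int_b
    by (simp add: set_integral_add set_integral_square_fst[where M=M] set_integral_square_snd[where M=M])
  finally show ?thesis .
qed

lemma I_eps_lipschitz:
  assumes "T > 0" "eps > 0" and th: "th \<in> Yspace T B3" and th': "th' \<in> Yspace T B3"
    and g: "g \<in> X_B T B1" and g': "g' \<in> X_B T B1"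
  shows "\<bar>I_eps T B3 eps th' g' - I_eps T B3 eps th g\<bar>
           \<le> 2 * T * (T * Ydist T th th' / eps + 2 * B3 / eps * (sqrt T * L2dist 0 T g g'))"
proof -
  let ?I = "{0<..<T}"
  define K where "K = 2 * B3 / eps"
  let ?b = "\<lambda>t. Ydist T th th' / eps + K * \<bar>g' t - g t\<bar>"
  have "K \<ge> 0"
    using Y_B_abs_le[OF Yspace_profile[OF th], of 0 0] assms(1,2) by (simp add: K_def)
  have gap_le: "\<bar>g' t - g t\<bar> \<le> 1" if "t \<in> ?I" for t
    using X_B_range[OF g that] X_B_range[OF g' that] by linarith
  have gap_meas: "(\<lambda>t. \<bar>g' t - g t\<bar>) \<in> borel_measurable (restrict_space borel ?I)"
    using X_B_borel_measurable[OF g] X_B_borel_measurable[OF g'] by simp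
  have gap_int: "set_integrable lborel ?I (\<lambda>t. \<bar>g' t - g t\<bar>)"
    using gap_meas gap_le by (intro set_integrable_bounded[where C=1]) auto
  have pointwise: "\<bar>A_eps B3 eps th' t (g' t) - A_eps B3 eps th t (g t)\<bar> \<le> ?b t" if "t \<in> ?I" for t
  proof -
    have "\<bar>A_eps B3 eps th t (g t) - A_eps B3 eps th' t (g' t)\<bar>
        \<le> L2dist 0 1 (th t) (th' t) / eps + K * \<bar>g t - g' t\<bar>"
      unfolding K_def using that assms(2) X_B_range[OF g that] X_B_range[OF g' that]
      by (intro A_eps_diff_le Yspace_profile[OF th] Yspace_profile[OF th']) auto
    moreover have "L2dist 0 1 (th t) (th' t) / eps \<le> Ydist T th th' / eps"
      using L2dist_le_Ydist[OF th th', of t] that assms(2) by (intro divide_right_mono) auto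
    ultimately show ?thesis by (simp add: abs_minus_commute)
  qed
  have "\<bar>I_eps T B3 eps th' g' - I_eps T B3 eps th g\<bar> \<le> 2 * measure lborel ?I * (LINT t:?I|lborel. ?b t)"
    unfolding I_eps_eq_increment_integral
  proof (rule increment_integral_diff_le[where M="max B3 (Ydist T th th' / eps + K)"])
    show "(\<lambda>t. A_eps B3 eps th t (g t)) \<in> borel_measurable (restrict_space borel ?I)"
      by (rule A_eps_comp_borel_measurable[OF th assms(2) X_B_borel_measurable[OF g]])
        (use X_B_range[OF g] in auto)
    show "(\<lambda>t. A_eps B3 eps th' t (g' t)) \<in> borel_measurable (restrict_space borel ?I)"
      by (rule A_eps_comp_borel_measurable[OF th' assms(2) X_B_borel_measurable[OF g']])
        (use X_B_range[OF g'] in auto)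
    show "\<bar>A_eps B3 eps th t (g t)\<bar> \<le> max B3 (Ydist T th th' / eps + K)" if "t \<in> ?I" for t
      using that assms(2) X_B_range[OF g that]
      by (intro max.coboundedI1 abs_A_eps_le Yspace_profile[OF th]) auto
    show "\<bar>A_eps B3 eps th' t (g' t)\<bar> \<le> max B3 (Ydist T th th' / eps + K)" if "t \<in> ?I" for t
      using that assms(2) X_B_range[OF g' that]
      by (intro max.coboundedI1 abs_A_eps_le Yspace_profile[OF th']) auto
    show "?b t \<le> max B3 (Ydist T th th' / eps + K)" if "t \<in> ?I" for t
      using mult_left_mono[OF gap_le[OF that] \<open>K \<ge> 0\<close>] by simp
  qed (use gap_meas pointwise in simp_all)
  also have "\<dots> = 2 * T * (T * (Ydist T th th' / eps) + K * (LINT t:?I|lborel. \<bar>g' t - g t\<bar>))"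
    using assms(1) gap_int set_integrable_bounded[of "\<lambda>_. Ydist T th th' / eps" ?I]
    by (subst set_integral_add) (auto simp: set_integral_const)
  also have "\<dots> \<le> 2 * T * (T * (Ydist T th th' / eps) + K * (sqrt T * L2dist 0 T g g'))"
    using X_B_set_integral_abs_diff_le[OF g g'] \<open>K \<ge> 0\<close> assms(1)
    by (intro mult_left_mono add_left_mono) auto
  finally show ?thesis by (simp add: K_def)
qed

theorem lemma6p7:
  fixes T B1 B3 eps :: real
  assumes "T > 0" "B1 > 0" "B3 > 0" "eps > 0"
  shows "\<forall>th\<in>Yspace T B3. \<forall>g\<in>X_B T B1. \<forall>e>0. \<exists>d>0.
           \<forall>th'\<in>Yspace T B3. \<forall>g'\<in>X_B T B1.
             Ydist T th th' < d \<and> L2dist 0 T g g' < d \<longrightarrow>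
             \<bar>I_eps T B3 eps th' g' - I_eps T B3 eps th g\<bar> < e"
proof (intro ballI allI impI)
  fix th g and e :: real
  assume th: "th \<in> Yspace T B3" and g: "g \<in> X_B T B1" and "e > 0"
  define C where "C = 2 * T * (T / eps + 2 * B3 / eps * sqrt T)"
  define d where "d = e / (C + 1)"
  have "C \<ge> 0" using assms by (simp add: C_def)
  then have "d > 0" "d * C < e" using \<open>e > 0\<close> by (simp_all add: d_def field_simps)
  show "\<exists>d>0. \<forall>th'\<in>Yspace T B3. \<forall>g'\<in>X_B T B1. Ydist T th th' < d \<and> L2dist 0 T g g' < d \<longrightarrow>
      \<bar>I_eps T B3 eps th' g' - I_eps T B3 eps th g\<bar> < e"
  proof (intro exI[of _ d] conjI \<open>d > 0\<close> ballI impI)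
    fix th' g' assume th': "th' \<in> Yspace T B3" and g': "g' \<in> X_B T B1"
      and close: "Ydist T th th' < d \<and> L2dist 0 T g g' < d"
    have "\<bar>I_eps T B3 eps th' g' - I_eps T B3 eps th g\<bar>
        \<le> 2 * T * (T * Ydist T th th' / eps + 2 * B3 / eps * (sqrt T * L2dist 0 T g g'))"
      by (rule I_eps_lipschitz[OF assms(1,4) th th' g g'])
    also have "\<dots> \<le> 2 * T * (T * d / eps + 2 * B3 / eps * (sqrt T * d))"
      using close assms by (intro mult_left_mono add_mono divide_right_mono) auto
    also have "\<dots> = d * C"
      by (simp add: C_def algebra_simps)
    finally show "\<bar>I_eps T B3 eps th' g' - I_eps T B3 eps th g\<bar> < e"
      using \<open>d * C < e\<close> by linarith
  qed
qed

end
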